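(* Let $m\ge 1$, let $\mathbf b\in\mathbb R^{2m}$ be a fixed unit vector and let $t_0\in\mathbb N_0$. For $X\in\mathbb M_{2m}(\mathbb R)$ define $$\alpha_X:\mathbb S_{2m}(\mathbb R)\to\mathbb R^{m(2m+1)},\qquad \alpha_X(\Gamma):=\Big(\mathbf b^T X^i\,\Gamma\,(X^T)^i\,\mathbf b\Big)_{i=t_0}^{t_0+m(2m+1)-1},$$ $$\beta_X:\mathbb R^{2m}\to\mathbb R^{2m},\qquad \beta_X(\mathbf d):=\Big(\mathbf b^T X^i\,\mathbf d\Big)_{i=t_0}^{t_0+2m-1}.$$ Then there is a Lebesgue-null set $\mathcal N_{\mathbf b}\subset\mathbb M_{2m}(\mathbb R)\cong\mathbb R^{4m^2}$ (depending on $\mathbf b$) such that for every $X\notin\mathcal N_{\mathbf b}$ both $\alpha_X$ and $\beta_X$ are injective. Consequently, for such $X$, the pair $(\Gamma,\mathbf d)$ is uniquely determined by the values $\mathbf b^T X^i\Gamma (X^T)^i\mathbf b$ and $\mathbf b^TX^i\mathbf d$ for the $m(2m+1)$ consecutive times $i=t_0,\dots,t_0+m(2m+1)-1$.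
   Context: $\mathbb M_n(\mathbb R)$ denotes real $n\times n$ matrices and $\mathbb S_n(\mathbb R)$ real symmetric $n\times n$ matrices. Physically, $\Gamma$ is the covariance matrix and $\mathbf d$ the displacement vector of an $m$-mode Gaussian state, $\mathbf b^T\mathbf R$ is a fixed homodyne measurement whose mean and variance after $i$ applications of a Gaussian channel with matrix $X$ are (up to known additive terms) $\mathbf b^TX^i\mathbf d$ and $\mathbf b^TX^i\Gamma(X^T)^i\mathbf b$. *)

theory Defs
  imports "HOL-Analysis.Analysis"
begin

primrec matpow :: "real^'n^'n \<Rightarrow> nat \<Rightarrow> real^'n^'n" where
  "matpow X 0 = mat 1"
| "matpow X (Suc i) = X ** matpow X i"

text \<open>alpha_X(Gamma) = (b^T X^i Gamma (X^T)^i b) for i = t0 .. t0 + m(2m+1) - 1,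
  where 2m = CARD('n).\<close>
definition alpha_map :: "real^'n \<Rightarrow> nat \<Rightarrow> real^'n^'n \<Rightarrow> real^'n^'n \<Rightarrow> (nat \<Rightarrow> real)" where
  "alpha_map b t0 X G =
     (\<lambda>i\<in>{t0..<t0 + (CARD('n) div 2) * (CARD('n) + 1)}.
        b \<bullet> ((matpow X i ** G ** matpow (transpose X) i) *v b))"

definition beta_map :: "real^'n \<Rightarrow> nat \<Rightarrow> real^'n^'n \<Rightarrow> real^'n \<Rightarrow> (nat \<Rightarrow> real)" where
  "beta_map b t0 X d = (\<lambda>i\<in>{t0..<t0 + CARD('n)}. b \<bullet> (matpow X i *v d))"

definition sym_mats :: "(real^'n^'n) set" where
  "sym_mats = {G. transpose G = G}"

end

theory Submission
  imports Defs "HOL-Computational_Algebra.Polynomial"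
begin

(* Both maps are linear. Choosing an enumeration e of the coordinates and an enumeration of the
   pairs p, q with e p \<le> e q, injectivity of \<beta>_X and of \<alpha>_X on symmetric matrices follows from
   the non-vanishing of the determinant of a square matrix whose entries are polynomials in the
   entries of X. The zero set of a polynomial function that does not vanish identically is a
   Lebesgue null set, so it suffices to find one X where both determinants are nonzero. For
   X = S diag(\<lambda>) S^T with S orthogonal and S^T b without zero coordinates, the samples
   b^T X^i d and b^T X^i \<Gamma> (X^T)^i b are exponential sums in the \<lambda>_p resp. the products
   \<lambda>_p \<lambda>_q, and a Vandermonde argument applies as soon as these are pairwise distinct, e.g.
   for \<lambda>_p = 2^(3^(e p)). *)

section \<open>Zero sets of polynomial functions\<close>

lemma real_polynomial_function_on_lines:
  fixes f :: "'a::real_normed_vector \<Rightarrow> real"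
  assumes "real_polynomial_function f"
  shows "\<exists>D. \<forall>u w. \<exists>q. degree q \<le> D \<and> (\<forall>t. f (u + t *\<^sub>R w) = poly q t)"
  using assms
proof (induction rule: real_polynomial_function.induct)
  case (linear f)
  then have "degree [:f u, f w:] \<le> 1 \<and> (\<forall>t. f (u + t *\<^sub>R w) = poly [:f u, f w:] t)" for u w
    by (simp add: linear_add linear_scale bounded_linear.linear degree_pCons_le)
  then show ?case
    by blast
next
  case (const c)
  have "degree [:c:] \<le> 0 \<and> (\<forall>t. c = poly [:c:] t)"
    by simp
  then show ?case
    by blast
next
  case (add f g)
  then obtain D1 D2 where
    "\<forall>u w. \<exists>q. degree q \<le> D1 \<and> (\<forall>t. f (u + t *\<^sub>R w) = poly q t)"
    "\<forall>u w. \<exists>q. degree q \<le> D2 \<and> (\<forall>t. g (u + t *\<^sub>R w) = poly q t)"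
    by blast
  then have "\<exists>q. degree q \<le> max D1 D2 \<and> (\<forall>t. f (u + t *\<^sub>R w) + g (u + t *\<^sub>R w) = poly q t)" for u w
    by (metis (no_types) degree_add_le max.cobounded1 max.cobounded2 order.trans poly_add)
  then show ?case
    by blast
next
  case (mult f g)
  then obtain D1 D2 where
    "\<forall>u w. \<exists>q. degree q \<le> D1 \<and> (\<forall>t. f (u + t *\<^sub>R w) = poly q t)"
    "\<forall>u w. \<exists>q. degree q \<le> D2 \<and> (\<forall>t. g (u + t *\<^sub>R w) = poly q t)"
    by blast
  then have "\<exists>q. degree q \<le> D1 + D2 \<and> (\<forall>t. f (u + t *\<^sub>R w) * g (u + t *\<^sub>R w) = poly q t)" for u w
    by (metis (no_types) add_mono degree_mult_le order.trans poly_mult)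
  then show ?case
    by blast
qed

lemma real_polynomial_function_line_zeros_bounded:
  fixes f :: "'a::real_normed_vector \<Rightarrow> real"
  assumes "real_polynomial_function f" and "f a \<noteq> 0"
  obtains D where "\<And>w. finite {t. f (a + t *\<^sub>R w) = 0} \<and> card {t. f (a + t *\<^sub>R w) = 0} \<le> D"
proof -
  obtain D where D: "\<forall>u w. \<exists>q. degree q \<le> D \<and> (\<forall>t. f (u + t *\<^sub>R w) = poly q t)"
    using real_polynomial_function_on_lines[OF assms(1)] by blast
  have "finite {t. f (a + t *\<^sub>R w) = 0} \<and> card {t. f (a + t *\<^sub>R w) = 0} \<le> D" for w
  proof -
    obtain q where q: "degree q \<le> D" "\<And>t. f (a + t *\<^sub>R w) = poly q t"
      using D by blast
    have "q \<noteq> 0"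
      using q(2)[of 0] assms(2) by auto
    then show ?thesis
      unfolding q(2) using poly_roots_finite card_poly_roots_bound q(1) le_trans by blast
  qed
  then show thesis ..
qed

lemma sum_emeasure_le_multiplicity:
  assumes "finite K" and "C \<in> sets M"
    and "\<And>k. k \<in> K \<Longrightarrow> B k \<in> sets M" and "\<And>k. k \<in> K \<Longrightarrow> B k \<subseteq> C"
    and "\<And>x. card {k\<in>K. x \<in> B k} \<le> D"
  shows "(\<Sum>k\<in>K. emeasure M (B k)) \<le> of_nat D * emeasure M C"
proof -
  have "(\<Sum>k\<in>K. indicator (B k) x) \<le> (of_nat D * indicator C x :: ennreal)" for x
  proof (cases "x \<in> C")
    case True
    have "(\<Sum>k\<in>K. indicator (B k) x :: ennreal) = of_nat (card {k\<in>K. x \<in> B k})"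
      using assms(1) by (simp add: indicator_def Int_def)
    then show ?thesis
      using True assms(5)[of x] by simp
  next
    case False
    then have "\<forall>k\<in>K. x \<notin> B k"
      using assms(4) by blast
    then show ?thesis
      using False by simp
  qed
  then have "(\<integral>\<^sup>+x. (\<Sum>k\<in>K. indicator (B k) x) \<partial>M) \<le> (\<integral>\<^sup>+x. of_nat D * indicator C x \<partial>M)"
    by (intro nn_integral_mono)
  then show ?thesis
    using assms(1-3) by (simp add: nn_integral_sum nn_integral_cmult_indicator)
qed

definition dilation :: "'a::real_vector \<Rightarrow> real \<Rightarrow> 'a \<Rightarrow> 'a" where
  "dilation a s x = a + s *\<^sub>R (x - a)"

lemma emeasure_dilation_image_ge:
  fixes A :: "'a::euclidean_space set"
  assumes "1 \<le> s"
  shows "emeasure lebesgue A \<le> emeasure lebesgue (dilation a s ` A)"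
proof -
  have "dilation a s = (\<lambda>x. s *\<^sub>R x + (1 - s) *\<^sub>R a)"
    by (auto simp: dilation_def algebra_simps)
  then have "emeasure lebesgue (dilation a s ` A) = ennreal (s ^ DIM('a)) * emeasure lebesgue A"
    using emeasure_lebesgue_affine[of s "(1 - s) *\<^sub>R a" A] assms by simp
  moreover have "1 \<le> ennreal (s ^ DIM('a))"
    using assms by (simp add: one_le_power)
  ultimately show ?thesis
    by (metis mult_1 mult_right_mono zero_le)
qed

lemma dilation_image_subset_cball:
  fixes A :: "'a::real_normed_vector set"
  assumes "0 \<le> s" and "s \<le> c" and "A \<subseteq> cball a R"
  shows "dilation a s ` A \<subseteq> cball a (c * R)"
proof
  fix y assume "y \<in> dilation a s ` A"
  then obtain x where x: "x \<in> A" "y = dilation a s x"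
    by auto
  have "a - dilation a s x = s *\<^sub>R (a - x)"
    by (simp add: dilation_def algebra_simps)
  then have "dist a y = s * dist a x"
    using x(2) assms(1) by (simp only: dist_norm norm_scaleR abs_of_nonneg)
  also have "\<dots> \<le> c * dist a x"
    using assms(2) by (simp add: mult_right_mono)
  also have "\<dots> \<le> c * R"
  proof (rule mult_left_mono)
    show "dist a x \<le> R"
      using assms(3) x(1) by auto
  qed (use assms(1,2) in linarith)
  finally show "y \<in> cball a (c * R)"
    by simp
qed

(* Dilating A about a by M distinct factors in [1, 2] yields M sets of measure at least |A|
   inside cball a (2 R) which overlap at most D-fold, so M |A| \<le> D |cball a (2 R)| for all M. *)
lemma measure_eq_0_if_dilates_overlap_bounded:
  fixes A :: "'a::euclidean_space set"
  assumes "compact A" and "A \<subseteq> cball a R"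
    and overlap: "\<And>(K :: nat set) s x. inj_on s K \<Longrightarrow> (\<And>k. 1 \<le> s k) \<Longrightarrow> card {k\<in>K. x \<in> dilation a (s k) ` A} \<le> D"
  shows "measure lebesgue A = 0"
proof -
  define C where "C = cball a (2 * R)"
  have A: "A \<in> lmeasurable"
    using assms(1) by (rule lmeasurable_compact)
  have dilates: "dilation a s ` A \<in> sets lebesgue" for s
    using assms(1) unfolding dilation_def
    by (intro fmeasurableD lmeasurable_compact compact_continuous_image continuous_intros)
  have bound: "real M * measure lebesgue A \<le> real D * measure lebesgue C" for M :: nat
  proof (cases "M = 0")
    case False
    define s where "s k = 1 + real k / real M" for k
    have s: "1 \<le> s k" for k
      by (simp add: s_def)
    have "inj_on s {..<M}"
      using False by (simp add: s_def inj_on_def)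
    have "of_nat M * emeasure lebesgue A = (\<Sum>k<M. emeasure lebesgue A)"
      by simp
    also have "\<dots> \<le> (\<Sum>k<M. emeasure lebesgue (dilation a (s k) ` A))"
      by (intro sum_mono emeasure_dilation_image_ge s)
    also have "\<dots> \<le> of_nat D * emeasure lebesgue C"
    proof (rule sum_emeasure_le_multiplicity)
      show "dilation a (s k) ` A \<subseteq> C" if "k \<in> {..<M}" for k
        unfolding C_def using that s[of k] False
        by (intro dilation_image_subset_cball assms(2)) (auto simp: s_def)
    qed (use dilates s overlap[OF \<open>inj_on s {..<M}\<close>] in \<open>auto simp: C_def\<close>)
    finally have "of_nat M * emeasure lebesgue A \<le> of_nat D * emeasure lebesgue C" .
    moreover have "emeasure lebesgue A = measure lebesgue A" "emeasure lebesgue C = measure lebesgue C"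
      using A by (simp_all add: C_def emeasure_eq_measure2)
    ultimately have "ennreal (real M * measure lebesgue A) \<le> ennreal (real D * measure lebesgue C)"
      by (simp add: ennreal_mult ennreal_of_nat_eq_real_of_nat)
    then show ?thesis
      by (simp add: ennreal_le_iff)
  qed simp
  show ?thesis
  proof (rule ccontr)
    assume "measure lebesgue A \<noteq> 0"
    then have "measure lebesgue A > 0"
      using measure_nonneg less_eq_real_def by metis
    moreover obtain M :: nat where "real D * measure lebesgue C / measure lebesgue A < M"
      using reals_Archimedean2 by blast
    ultimately show False
      using bound[of M] by (simp add: field_simps)
  qed
qed

lemma card_dilates_containing_le:
  assumes "finite {t. f (a + t *\<^sub>R (x - a)) = 0}" and "card {t. f (a + t *\<^sub>R (x - a)) = 0} \<le> D"
    and "A \<subseteq> {y. f y = 0}" and "inj_on s K" and "\<And>k. s k \<noteq> 0"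
  shows "card {k\<in>K. x \<in> dilation a (s k) ` A} \<le> D"
proof -
  have "(\<lambda>k. 1 / s k) ` {k\<in>K. x \<in> dilation a (s k) ` A} \<subseteq> {t. f (a + t *\<^sub>R (x - a)) = 0}"
  proof clarify
    fix k y assume "y \<in> A"
    moreover have "a + (1 / s k) *\<^sub>R (dilation a (s k) y - a) = y"
      using assms(5)[of k] by (simp add: dilation_def)
    ultimately show "f (a + (1 / s k) *\<^sub>R (dilation a (s k) y - a)) = 0"
      using assms(3) by auto
  qed
  moreover have "inj_on (\<lambda>k. 1 / s k) {k\<in>K. x \<in> dilation a (s k) ` A}"
  proof (rule inj_onI)
    fix k k' assume "k \<in> {k\<in>K. x \<in> dilation a (s k) ` A}" "k' \<in> {k\<in>K. x \<in> dilation a (s k) ` A}"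
      and "1 / s k = 1 / s k'"
    then show "k = k'"
      by (intro inj_onD[OF assms(4)]) auto
  qed
  ultimately have "card {k\<in>K. x \<in> dilation a (s k) ` A} \<le> card {t. f (a + t *\<^sub>R (x - a)) = 0}"
    using assms(1) by (blast intro: card_inj_on_le)
  then show ?thesis
    using assms(2) by linarith
qed

lemma real_polynomial_function_zeros_cball_null:
  fixes f :: "'a::euclidean_space \<Rightarrow> real"
  assumes f: "real_polynomial_function f" and "f a \<noteq> 0"
  shows "{x. f x = 0} \<inter> cball a R \<in> null_sets lebesgue"
proof -
  obtain D where D: "\<And>w. finite {t. f (a + t *\<^sub>R w) = 0} \<and> card {t. f (a + t *\<^sub>R w) = 0} \<le> D"
    using real_polynomial_function_line_zeros_bounded[OF assms] by blast
  have "closed {x. f x = 0}"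
    using f continuous_on_polymonial_function continuous_closed_preimage_constant[OF _ closed_UNIV]
    by (fastforce simp: real_polynomial_function_eq)
  then have compact: "compact ({x. f x = 0} \<inter> cball a R)"
    by (simp add: closed_Int_compact)
  have "card {k\<in>K. x \<in> dilation a (s k) ` ({y. f y = 0} \<inter> cball a R)} \<le> D"
    if "inj_on s K" "\<And>k. 1 \<le> s k" for K s x
  proof (rule card_dilates_containing_le)
    show "s k \<noteq> 0" for k
      using that(2)[of k] by auto
  qed (use D[of "x - a"] that(1) in auto)
  then have "measure lebesgue ({x. f x = 0} \<inter> cball a R) = 0"
    by (intro measure_eq_0_if_dilates_overlap_bounded[OF compact]) auto
  then show ?thesis
    using lmeasurable_compact[OF compact] by (simp add: null_sets_def emeasure_eq_measure2)
qed

lemma real_polynomial_function_zeros_null: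
  fixes f :: "'a::euclidean_space \<Rightarrow> real"
  assumes "real_polynomial_function f" and "f a \<noteq> 0"
  shows "{x. f x = 0} \<in> null_sets lebesgue"
proof -
  have "{x. f x = 0} = (\<Union>n. {x. f x = 0} \<inter> cball a (real n))"
    by (auto simp: real_arch_simple)
  also have "\<dots> \<in> null_sets lebesgue"
    using real_polynomial_function_zeros_cball_null[OF assms] by blast
  finally show ?thesis .
qed

section \<open>Matrix powers and the sampled maps\<close>

lemma matpow_Suc_right: "matpow X (Suc i) = matpow X i ** X"
  by (induction i) (simp_all add: matrix_mul_assoc)

lemma matpow_transpose: "matpow (transpose X) i = transpose (matpow X i)"
proof (induction i)
  case (Suc i)
  have "transpose (matpow X (Suc i)) = transpose X ** transpose (matpow X i)"
    by (simp only: matpow_Suc_right matrix_transpose_mul)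
  then show ?case
    by (simp add: Suc.IH)
qed simp

lemma matpow_orthogonal_conjugate:
  fixes S D :: "real^'n^'n"
  assumes "orthogonal_matrix S"
  shows "matpow (S ** D ** transpose S) i = S ** matpow D i ** transpose S"
proof (induction i)
  case 0
  show ?case
    using assms by (simp add: orthogonal_matrix_def)
next
  case (Suc i)
  have "transpose S ** (S ** Z) = Z" for Z :: "real^'n^'n"
    using assms by (simp add: orthogonal_matrix_def matrix_mul_assoc)
  then show ?case
    using Suc by (simp add: matrix_mul_assoc[symmetric])
qed

definition diag_mat :: "('n \<Rightarrow> real) \<Rightarrow> real^'n^'n" where
  "diag_mat l = (\<chi> p q. if p = q then l p else 0)"

lemma diag_mat_mult: "diag_mat l ** diag_mat l' = diag_mat (\<lambda>p. l p * l' p)"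
proof -
  have "(\<Sum>k\<in>UNIV. (if p = k then l p else 0) * (if k = q then l' k else 0)) =
      (\<Sum>k\<in>UNIV. if k = p then (if p = q then l p * l' p else 0) else 0)" for p q
    by (intro sum.cong) auto
  then show ?thesis
    by (simp add: diag_mat_def matrix_matrix_mult_def vec_eq_iff)
qed

lemma matpow_diag_mat: "matpow (diag_mat l) i = diag_mat (\<lambda>p. l p ^ i)"
  by (induction i) (simp_all add: diag_mat_mult, simp add: diag_mat_def mat_def)

lemma diag_mat_mult_vec: "diag_mat l *v v = (\<chi> p. l p * v $ p)"
proof -
  have "(\<Sum>q\<in>UNIV. (if p = q then l p else 0) * v $ q) = (\<Sum>q\<in>UNIV. if q = p then l p * v $ p else 0)" for p
    by (intro sum.cong) auto
  then show ?thesis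
    by (simp add: diag_mat_def matrix_vector_mult_def vec_eq_iff)
qed

lemma transpose_diag_mat: "transpose (diag_mat l) = diag_mat l"
  by (simp add: diag_mat_def transpose_def vec_eq_iff)

lemma inner_matrix_vector_transpose: "(A *v x) \<bullet> y = x \<bullet> (transpose A *v (y::real^'n))"
  by (metis dot_lmul_matrix inner_commute transpose_matrix_vector transpose_transpose)

definition readout :: "real^'n \<Rightarrow> real^'n^'n \<Rightarrow> nat \<Rightarrow> real^'n" where
  "readout b X i = matpow (transpose X) i *v b"

lemma alpha_map_eq_quadratic_form:
  fixes X :: "real^'n^'n"
  assumes "i \<in> {t0..<t0 + CARD('n) div 2 * (CARD('n) + 1)}"
  shows "alpha_map b t0 X G i = readout b X i \<bullet> (G *v readout b X i)"
proof -
  have "alpha_map b t0 X G i = b \<bullet> (matpow X i *v (G *v readout b X i))"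
    using assms by (simp add: alpha_map_def readout_def matrix_vector_mul_assoc matrix_mul_assoc)
  also have "\<dots> = readout b X i \<bullet> (G *v readout b X i)"
    by (simp add: readout_def matpow_transpose dot_lmul_matrix)
  finally show ?thesis .
qed

lemma beta_map_eq_inner:
  fixes X :: "real^'n^'n"
  assumes "i \<in> {t0..<t0 + CARD('n)}"
  shows "beta_map b t0 X d i = readout b X i \<bullet> d"
  using assms by (simp add: beta_map_def readout_def matpow_transpose dot_lmul_matrix)

lemma readout_orthogonal_diag:
  assumes "orthogonal_matrix S"
  shows "readout b (S ** diag_mat l ** transpose S) i = S *v (\<chi> p. l p ^ i * (transpose S *v b) $ p)"
proof -
  have "transpose (S ** diag_mat l ** transpose S) = S ** diag_mat l ** transpose S"
    by (simp add: matrix_transpose_mul matrix_mul_assoc transpose_diag_mat)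
  then show ?thesis
    using assms by (simp add: readout_def matpow_orthogonal_conjugate matpow_diag_mat
        matrix_vector_mul_assoc[symmetric] diag_mat_mult_vec del: transpose_matrix_vector)
qed

section \<open>Polynomial dependence on the matrix\<close>

definition polynomial_matrix_function :: "('a::real_normed_vector \<Rightarrow> real^'n^'m) \<Rightarrow> bool" where
  "polynomial_matrix_function M \<longleftrightarrow> (\<forall>i j. real_polynomial_function (\<lambda>x. M x $ i $ j))"

lemma polynomial_matrix_function_const: "polynomial_matrix_function (\<lambda>x. C)"
  by (simp add: polynomial_matrix_function_def real_polynomial_function_eq)

lemma polynomial_matrix_function_transpose: "polynomial_matrix_function (transpose :: real^'n^'m \<Rightarrow> _)"
proof -
  have "bounded_linear (\<lambda>X::real^'n^'m. X $ j $ i)" for i j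
    using bounded_linear_compose[OF bounded_linear_vec_nth[of i] bounded_linear_vec_nth[of j]] by simp
  then show ?thesis
    by (simp add: polynomial_matrix_function_def transpose_def real_polynomial_function.intros)
qed

(* The library hides the names of the introduction rules of real_polynomial_function;
   intros(2) is the rule for constants and intros(4) the one for products. *)
lemma polynomial_matrix_function_mult:
  "polynomial_matrix_function M \<Longrightarrow> polynomial_matrix_function N \<Longrightarrow> polynomial_matrix_function (\<lambda>x. M x ** N x)"
  unfolding polynomial_matrix_function_def matrix_matrix_mult_def
  by (auto intro!: real_polynomial_function_sum real_polynomial_function.intros(4))

lemma polynomial_matrix_function_matpow:
  "polynomial_matrix_function M \<Longrightarrow> polynomial_matrix_function (\<lambda>x. matpow (M x) i)"
  by (induction i) (simp_all add: polynomial_matrix_function_const polynomial_matrix_function_mult)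

lemma real_polynomial_function_mult_vec:
  "polynomial_matrix_function M \<Longrightarrow> real_polynomial_function (\<lambda>x. (M x *v v) $ i)"
  unfolding polynomial_matrix_function_def matrix_vector_mult_def
  by (auto intro!: real_polynomial_function_sum real_polynomial_function.intros(2,4))

lemma real_polynomial_function_det:
  "polynomial_matrix_function M \<Longrightarrow> real_polynomial_function (\<lambda>x. det (M x))"
  unfolding polynomial_matrix_function_def det_def
  by (auto intro!: real_polynomial_function_sum real_polynomial_function_prod
      real_polynomial_function.intros(2,4) simp: finite_permutations)

lemma real_polynomial_function_readout: "real_polynomial_function (\<lambda>X. readout b X i $ k)"
  unfolding readout_def
  by (intro real_polynomial_function_mult_vec polynomial_matrix_function_matpow
      polynomial_matrix_function_transpose)

section \<open>Injectivity from non-vanishing determinants\<close>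

lemma det_ne_0_iff_kernel: "det (A::real^'n^'n) \<noteq> 0 \<longleftrightarrow> (\<forall>x. A *v x = 0 \<longrightarrow> x = 0)"
  by (simp add: invertible_det_nz[symmetric] invertible_left_inverse matrix_left_invertible_ker)

definition beta_matrix :: "real^'n \<Rightarrow> nat \<Rightarrow> ('n \<Rightarrow> nat) \<Rightarrow> real^'n^'n \<Rightarrow> real^'n^'n" where
  "beta_matrix b t0 e X = (\<chi> j. readout b X (t0 + e j))"

lemma polynomial_matrix_function_beta_matrix: "polynomial_matrix_function (beta_matrix b t0 e)"
  by (simp add: polynomial_matrix_function_def beta_matrix_def real_polynomial_function_readout)

lemma inj_beta_map:
  fixes X :: "real^'n^'n"
  assumes "det (beta_matrix b t0 e X) \<noteq> 0" and "\<And>j. e j < CARD('n)"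
  shows "inj (beta_map b t0 X)"
proof (rule injI)
  fix d d' assume eq: "beta_map b t0 X d = beta_map b t0 X d'"
  have "readout b X (t0 + e j) \<bullet> (d - d') = 0" for j
  proof -
    have "t0 + e j \<in> {t0..<t0 + CARD('n)}"
      using assms(2)[of j] by simp
    then show ?thesis
      using fun_cong[OF eq, of "t0 + e j"] by (simp add: beta_map_eq_inner inner_diff_right)
  qed
  then have "beta_matrix b t0 e X *v (d - d') = 0"
    by (simp add: vec_eq_iff matrix_vector_mul_component beta_matrix_def)
  then have "d - d' = 0"
    using assms(1) det_ne_0_iff_kernel by blast
  then show "d = d'"
    by simp
qed

(* Rows (j, k) with e j \<le> e k sample the quadratic form at time t0 + \<iota> (j, k); the remaining
   rows record the antisymmetric part, so that on symmetric matrices the kernel is that of \<alpha>_X. *)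
definition alpha_matrix ::
    "real^'n \<Rightarrow> nat \<Rightarrow> ('n \<Rightarrow> nat) \<Rightarrow> ('n \<times> 'n \<Rightarrow> nat) \<Rightarrow> real^'n^'n \<Rightarrow> real^('n \<times> 'n)^('n \<times> 'n)" where
  "alpha_matrix b t0 e \<iota> X = (\<chi> jk. if e (fst jk) \<le> e (snd jk)
      then (\<chi> pq. readout b X (t0 + \<iota> jk) $ fst pq * readout b X (t0 + \<iota> jk) $ snd pq)
      else axis jk 1 - axis (prod.swap jk) 1)"

lemma polynomial_matrix_function_alpha_matrix:
  "polynomial_matrix_function (alpha_matrix b t0 e \<iota> :: real^'n^'n \<Rightarrow> _)"
  unfolding polynomial_matrix_function_def
proof (intro allI)
  fix jk pq :: "'n \<times> 'n"
  show "real_polynomial_function (\<lambda>X. alpha_matrix b t0 e \<iota> X $ jk $ pq)"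
  proof (cases "e (fst jk) \<le> e (snd jk)")
    case True
    then show ?thesis
      by (simp add: alpha_matrix_def real_polynomial_function.intros(4) real_polynomial_function_readout)
  next
    case False
    then show ?thesis
      by (simp add: alpha_matrix_def real_polynomial_function.intros(2))
  qed
qed

lemma quadratic_form_eq_sum: "w \<bullet> (H *v w) = (\<Sum>p\<in>UNIV. \<Sum>q\<in>UNIV. w $ p * w $ q * H $ p $ q)"
  by (simp add: inner_vec_def matrix_vector_mult_def sum_distrib_left ac_simps)

lemma alpha_matrix_row_sample:
  assumes "e (fst jk) \<le> e (snd jk)"
  shows "(alpha_matrix b t0 e \<iota> X *v g) $ jk =
    readout b X (t0 + \<iota> jk) \<bullet> ((\<chi> p q. g $ (p, q)) *v readout b X (t0 + \<iota> jk))"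
proof -
  define v where "v = readout b X (t0 + \<iota> jk)"
  have "(alpha_matrix b t0 e \<iota> X *v g) $ jk = (\<Sum>pq\<in>UNIV. v $ fst pq * v $ snd pq * g $ pq)"
    using assms by (simp add: alpha_matrix_def matrix_vector_mul_component inner_vec_def v_def)
  also have "\<dots> = (\<Sum>p\<in>UNIV. \<Sum>q\<in>UNIV. v $ p * v $ q * g $ (p, q))"
    by (simp add: sum.cartesian_product case_prod_unfold)
  also have "\<dots> = v \<bullet> ((\<chi> p q. g $ (p, q)) *v v)"
    by (simp add: quadratic_form_eq_sum)
  finally show ?thesis
    by (simp add: v_def)
qed

lemma alpha_matrix_row_antisym:
  assumes "\<not> e (fst jk) \<le> e (snd jk)"
  shows "(alpha_matrix b t0 e \<iota> X *v g) $ jk = g $ jk - g $ prod.swap jk"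
proof -
  have "alpha_matrix b t0 e \<iota> X $ jk = axis jk 1 - axis (prod.swap jk) 1"
    using assms by (simp add: alpha_matrix_def)
  then show ?thesis
    by (simp add: matrix_vector_mul_component inner_diff_left inner_axis')
qed

lemma alpha_matrix_kernel_symmetric:
  assumes "inj e" and "alpha_matrix b t0 e \<iota> X *v g = 0"
  shows "g $ (q, p) = g $ (p, q)"
proof (cases "p = q")
  case False
  have swap_eq: "g $ jk = g $ prod.swap jk" if "\<not> e (fst jk) \<le> e (snd jk)" for jk
    using alpha_matrix_row_antisym[OF that, of b t0 \<iota> X g] assms(2) by simp
  have "e p \<noteq> e q"
    using False assms(1) by (simp add: inj_eq)
  then have "\<not> e p \<le> e q \<or> \<not> e q \<le> e p"
    by linarith
  then show ?thesis
  proof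
    assume "\<not> e p \<le> e q"
    then show ?thesis
      using swap_eq[of "(p, q)"] by simp
  next
    assume "\<not> e q \<le> e p"
    then show ?thesis
      using swap_eq[of "(q, p)"] by simp
  qed
qed simp

lemma symmetric_matrix_nth:
  assumes "transpose A = A"
  shows "A $ i $ j = A $ j $ i"
proof -
  have "A $ i $ j = transpose A $ j $ i"
    by (simp add: transpose_def)
  then show ?thesis
    using assms by simp
qed

lemma inj_on_alpha_map:
  fixes X :: "real^'n^'n"
  assumes "det (alpha_matrix b t0 e \<iota> X) \<noteq> 0"
    and "\<And>jk. e (fst jk) \<le> e (snd jk) \<Longrightarrow> \<iota> jk < CARD('n) div 2 * (CARD('n) + 1)"
  shows "inj_on (alpha_map b t0 X) sym_mats"
proof (rule inj_onI)
  fix G G' assume "G \<in> sym_mats" "G' \<in> sym_mats" and eq: "alpha_map b t0 X G = alpha_map b t0 X G'"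
  then have sym: "(G - G') $ q $ p = (G - G') $ p $ q" for p q
    by (simp add: symmetric_matrix_nth sym_mats_def)
  define g where "g = (\<chi> pq. (G - G') $ fst pq $ snd pq)"
  have "(alpha_matrix b t0 e \<iota> X *v g) $ jk = 0" for jk
  proof (cases "e (fst jk) \<le> e (snd jk)")
    case True
    have "(\<chi> p q. g $ (p, q)) = G - G'"
      by (simp add: g_def vec_eq_iff)
    then show ?thesis
      using True fun_cong[OF eq, of "t0 + \<iota> jk"] assms(2)[OF True]
      by (simp add: alpha_matrix_row_sample alpha_map_eq_quadratic_form matrix_vector_mult_diff_rdistrib
          inner_diff_right)
  next
    case False
    then show ?thesis
      using sym by (simp add: alpha_matrix_row_antisym g_def)
  qed
  then have "g = 0"
    using assms(1) det_ne_0_iff_kernel by (metis vec_eq_iff zero_index)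
  then show "G = G'"
    by (simp add: g_def vec_eq_iff)
qed

section \<open>A matrix where both determinants are nonzero\<close>

lemma coeffs_zero_if_power_sums_zero:
  fixes \<mu> c :: "'p \<Rightarrow> 'a::idom"
  assumes "finite P" and "inj_on \<mu> P" and "\<And>p. p \<in> P \<Longrightarrow> \<mu> p \<noteq> 0"
    and sums: "\<And>r. r < card P \<Longrightarrow> (\<Sum>p\<in>P. c p * \<mu> p ^ (t0 + r)) = 0"
    and "p0 \<in> P"
  shows "c p0 = 0"
proof -
  define q where "q = (\<Prod>p\<in>P - {p0}. [:- \<mu> p, 1:])"
  have poly_q: "poly q x = (\<Prod>p\<in>P - {p0}. x - \<mu> p)" for x
    by (simp add: q_def poly_prod)
  have "degree q \<le> card (P - {p0})"
    unfolding q_def by (rule order.trans[OF degree_prod_sum_le]) (auto simp: assms(1))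
  then have "degree q < card P"
    using assms(1,5) by (meson card_Diff1_less le_less_trans)
  then have "0 = (\<Sum>r\<le>degree q. coeff q r * (\<Sum>p\<in>P. c p * \<mu> p ^ (t0 + r)))"
    using sums by simp
  also have "\<dots> = (\<Sum>p\<in>P. c p * \<mu> p ^ t0 * poly q (\<mu> p))"
    by (simp add: poly_altdef sum_distrib_left sum_distrib_right power_add ac_simps
        sum.swap[of _ "{..degree q}"])
  also have "\<dots> = c p0 * \<mu> p0 ^ t0 * poly q (\<mu> p0)"
  proof -
    have "poly q (\<mu> p) = 0" if "p \<in> P - {p0}" for p
      using that assms(1) by (auto simp: poly_q prod_zero_iff)
    then show ?thesis
      by (simp add: sum.remove[OF assms(1,5)] sum.neutral)
  qed
  finally have "c p0 * \<mu> p0 ^ t0 * poly q (\<mu> p0) = 0" ..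
  moreover have "poly q (\<mu> p0) \<noteq> 0"
    using assms(1,2,5) by (auto simp: poly_q inj_on_def)
  ultimately show ?thesis
    using assms(3,5) by simp
qed

lemma sum_symmetric_upper_pairs:
  fixes e :: "'n::finite \<Rightarrow> 'b::linorder" and f :: "'n \<Rightarrow> 'n \<Rightarrow> 'a::comm_semiring_1"
  assumes "inj e" and sym: "\<And>p q. f p q = f q p"
  shows "(\<Sum>p\<in>UNIV. \<Sum>q\<in>UNIV. f p q) = (\<Sum>(p, q)\<in>{(p, q). e p \<le> e q}. (if p = q then 1 else 2) * f p q)"
proof -
  define P where "P = {(p, q). e p \<le> e q}"
  define P' where "P' = {(p, q). e p < e q}"
  have P': "P' = P \<inter> {(p, q). p \<noteq> q}"
    using assms(1) by (auto simp: P_def P'_def inj_eq order.order_iff_strict)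
  have "(\<Sum>p\<in>UNIV. \<Sum>q\<in>UNIV. f p q) = (\<Sum>(p, q)\<in>P. f p q) + (\<Sum>(p, q)\<in>prod.swap ` P'. f p q)"
  proof -
    have "UNIV = P \<union> prod.swap ` P'" and "P \<inter> prod.swap ` P' = {}"
      by (auto simp: P_def P'_def)
    then show ?thesis
      by (simp add: sum.cartesian_product sum.union_disjoint[symmetric])
  qed
  also have "(\<Sum>(p, q)\<in>prod.swap ` P'. f p q) = (\<Sum>(p, q)\<in>P'. f p q)"
    by (simp add: sum.reindex case_prod_unfold sym)
  also have "\<dots> = (\<Sum>(p, q)\<in>P. if p = q then 0 else f p q)"
    by (simp add: P' sum.If_cases case_prod_unfold Int_def)
  also have "(\<Sum>(p, q)\<in>P. f p q) + \<dots> = (\<Sum>(p, q)\<in>P. (if p = q then 1 else 2) * f p q)"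
    by (simp add: sum.distrib[symmetric] case_prod_unfold) (intro sum.cong, auto simp: mult_2)
  finally show ?thesis
    by (simp add: P_def)
qed

lemma card_upper_pairs:
  fixes e :: "'n::finite \<Rightarrow> 'b::linorder"
  assumes "inj e"
  shows "2 * card {(p, q). e p \<le> e q} = CARD('n) * (CARD('n) + 1)"
proof -
  define P where "P = {(p, q). e p \<le> e q}"
  have "P \<union> prod.swap ` P = UNIV"
    by (auto simp: P_def)
  moreover have "P \<inter> prod.swap ` P = (\<lambda>p. (p, p)) ` UNIV"
    using assms by (auto simp: P_def inj_eq dest: antisym)
  moreover have "card (prod.swap ` P) = card P"
    by (simp add: card_image)
  moreover have "card P + card (prod.swap ` P) = card (P \<union> prod.swap ` P) + card (P \<inter> prod.swap ` P)"
    by (rule card_Un_Int) auto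
  moreover have "card (UNIV :: ('n \<times> 'n) set) = CARD('n) * CARD('n)"
    by (simp add: card_cartesian_product flip: UNIV_Times_UNIV)
  moreover have "card ((\<lambda>p. (p, p)) ` (UNIV :: 'n set)) = CARD('n)"
    by (simp add: card_image inj_on_def)
  ultimately show ?thesis
    by (simp add: P_def)
qed

lemma card_upper_pairs_even:
  fixes e :: "'n::finite \<Rightarrow> 'b::linorder"
  assumes "inj e" and "even CARD('n)"
  shows "card {(p, q). e p \<le> e q} = CARD('n) div 2 * (CARD('n) + 1)"
proof -
  obtain m where "CARD('n) = 2 * m"
    using assms(2) by blast
  then show ?thesis
    using card_upper_pairs[OF assms(1)] by simp
qed

lemma three_pow_sum_eq_imp_eq:
  fixes a b c d :: nat
  assumes "a \<le> b" "c \<le> d" "(3::nat) ^ a + 3 ^ b = 3 ^ c + 3 ^ d"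
  shows "a = c \<and> b = d"
proof -
  have less: "3 ^ x + 3 ^ y < (3::nat) ^ z + 3 ^ w" if "x \<le> y" "y < w" for x y z w
  proof -
    have "(3::nat) ^ x + 3 ^ y \<le> 2 * 3 ^ y"
      using that(1) by (simp add: power_increasing)
    also have "\<dots> < 3 ^ Suc y"
      by simp
    also have "\<dots> \<le> 3 ^ w"
      using that(2) by (intro power_increasing) auto
    finally show ?thesis
      by simp
  qed
  have "b = d"
    using less[OF assms(1)] less[OF assms(2)] assms(3) by (metis less_irrefl nat_neq_iff)
  then show ?thesis
    using assms(3) by simp
qed

lemma inj_on_products_two_pow_three_pow:
  fixes e :: "'n \<Rightarrow> nat"
  assumes "inj e"
  shows "inj_on (\<lambda>(p, q). (2::real) ^ 3 ^ e p * 2 ^ 3 ^ e q) {(p, q). e p \<le> e q}"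
proof (rule inj_onI, clarsimp)
  fix p q p' q' assume "e p \<le> e q" "e p' \<le> e q'" "(2::real) ^ 3 ^ e p * 2 ^ 3 ^ e q = 2 ^ 3 ^ e p' * 2 ^ 3 ^ e q'"
  then have "e p = e p' \<and> e q = e q'"
    by (intro three_pow_sum_eq_imp_eq) (simp_all flip: power_add)
  then show "p = p' \<and> q = q'"
    using assms by (simp add: inj_eq)
qed

lemma exists_orthogonal_matrix_full_support:
  fixes b :: "real^'n"
  assumes "b \<noteq> 0"
  shows "\<exists>S. orthogonal_matrix S \<and> (\<forall>p. (transpose S *v b) $ p \<noteq> 0)"
proof -
  define u :: "real^'n" where "u = (\<chi> p. norm b / sqrt CARD('n))"
  have "u \<bullet> u = norm b ^ 2"
    by (simp add: u_def inner_vec_def power_divide flip: power2_eq_square)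
  then have "norm u = norm b"
    by (simp add: norm_eq_sqrt_inner)
  then obtain f where f: "orthogonal_transformation f" "f u = b"
    using orthogonal_transformation_exists by blast
  then have S: "orthogonal_matrix (matrix f)" and "matrix f *v u = b"
    by (simp_all add: orthogonal_transformation_matrix orthogonal_transformation_linear)
  then have "transpose (matrix f) *v b = u"
    by (metis matrix_vector_mul_assoc matrix_vector_mul_lid orthogonal_matrix_def)
  then have "(transpose (matrix f) *v b) $ p \<noteq> 0" for p
    using assms by (simp add: u_def del: transpose_matrix_vector)
  with S show ?thesis
    by blast
qed

lemma det_beta_matrix_orthogonal_diag_ne_0:
  fixes S :: "real^'n^'n"
  assumes S: "orthogonal_matrix S" and u: "\<And>p. (transpose S *v b) $ p \<noteq> 0"
    and "inj l" and "\<And>p. l p \<noteq> 0" and e: "bij_betw e UNIV {0..<CARD('n)}"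
  shows "det (beta_matrix b t0 e (S ** diag_mat l ** transpose S)) \<noteq> 0"
  unfolding det_ne_0_iff_kernel
proof (intro allI impI)
  fix d assume kernel: "beta_matrix b t0 e (S ** diag_mat l ** transpose S) *v d = 0"
  define z where "z = transpose S *v d"
  have "(\<Sum>p\<in>UNIV. ((transpose S *v b) $ p * z $ p) * l p ^ (t0 + r)) = 0" if "r < CARD('n)" for r
  proof -
    have "r \<in> e ` UNIV"
      using e that by (simp add: bij_betw_def)
    then obtain j where "r = e j"
      by blast
    then have "0 = readout b (S ** diag_mat l ** transpose S) (t0 + r) \<bullet> d"
      using kernel by (simp add: vec_eq_iff matrix_vector_mul_component beta_matrix_def)
    also have "\<dots> = (\<chi> p. l p ^ (t0 + r) * (transpose S *v b) $ p) \<bullet> z"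
      using S by (simp only: readout_orthogonal_diag inner_matrix_vector_transpose z_def)
    also have "\<dots> = (\<Sum>p\<in>UNIV. ((transpose S *v b) $ p * z $ p) * l p ^ (t0 + r))"
      by (simp add: inner_vec_def mult_ac del: transpose_matrix_vector)
    finally show ?thesis ..
  qed
  then have "(transpose S *v b) $ p * z $ p = 0" for p
    using coeffs_zero_if_power_sums_zero[of UNIV l "\<lambda>p. (transpose S *v b) $ p * z $ p" t0 p] assms(3,4)
    by simp
  then have "z = 0"
    using u by (simp add: vec_eq_iff)
  moreover have "S *v z = d"
    using S by (simp add: z_def matrix_vector_mul_assoc orthogonal_matrix_def del: transpose_matrix_vector)
  ultimately show "d = 0"
    by simp
qed

lemma readout_quadratic_form_orthogonal_diag:
  fixes S G :: "real^'n^'n" and b :: "real^'n" and e :: "'n \<Rightarrow> 'b::linorder"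
  assumes S: "orthogonal_matrix S" and "inj e" and "transpose G = G"
  defines "u \<equiv> transpose S *v b" and "H \<equiv> transpose S ** G ** S"
  shows "readout b (S ** diag_mat l ** transpose S) i \<bullet> (G *v readout b (S ** diag_mat l ** transpose S) i)
    = (\<Sum>(p, q)\<in>{(p, q). e p \<le> e q}. (if p = q then 1 else 2) * (u $ p * u $ q * H $ p $ q) * (l p * l q) ^ i)"
proof -
  define w where "w = (\<chi> p. l p ^ i * u $ p)"
  have "transpose H = H"
    using assms(3) by (simp add: H_def matrix_transpose_mul matrix_mul_assoc)
  then have H_sym: "H $ q $ p = H $ p $ q" for p q
    by (rule symmetric_matrix_nth)
  have "readout b (S ** diag_mat l ** transpose S) i \<bullet> (G *v readout b (S ** diag_mat l ** transpose S) i)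
      = (S *v w) \<bullet> (G *v (S *v w))"
    using S by (simp only: readout_orthogonal_diag w_def u_def)
  also have "\<dots> = w \<bullet> (H *v w)"
    by (simp add: H_def inner_matrix_vector_transpose matrix_vector_mul_assoc matrix_mul_assoc
        del: transpose_matrix_vector)
  also have "\<dots> = (\<Sum>(p, q)\<in>{(p, q). e p \<le> e q}. (if p = q then 1 else 2) * (w $ p * w $ q * H $ p $ q))"
    unfolding quadratic_form_eq_sum by (rule sum_symmetric_upper_pairs[OF assms(2)]) (simp add: H_sym mult_ac)
  also have "\<dots> = (\<Sum>(p, q)\<in>{(p, q). e p \<le> e q}. (if p = q then 1 else 2) * (u $ p * u $ q * H $ p $ q) * (l p * l q) ^ i)"
    by (intro sum.cong) (auto simp: w_def power_mult_distrib mult_ac)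
  finally show ?thesis .
qed

lemma symmetric_matrix_eq_0_if_upper_eq_0:
  fixes H :: "'a::zero^'n^'n" and e :: "'n \<Rightarrow> 'b::linorder"
  assumes "transpose H = H" and "\<And>p q. e p \<le> e q \<Longrightarrow> H $ p $ q = 0"
  shows "H = 0"
proof -
  have "H $ p $ q = 0" for p q
  proof (cases "e p \<le> e q")
    case False
    then show ?thesis
      using assms(2)[of q p] symmetric_matrix_nth[OF assms(1), of p q] by simp
  qed (rule assms(2))
  then show ?thesis
    by (simp add: vec_eq_iff)
qed

lemma det_alpha_matrix_orthogonal_diag_ne_0:
  fixes S :: "real^'n^'n"
  assumes S: "orthogonal_matrix S" and u: "\<And>p. (transpose S *v b) $ p \<noteq> 0"
    and "inj e" and \<iota>: "bij_betw \<iota> {(p, q). e p \<le> e q} {0..<card {(p, q). e p \<le> e q}}"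
    and "\<And>p. l p \<noteq> 0" and "inj_on (\<lambda>(p, q). l p * l q) {(p, q). e p \<le> e q}"
  shows "det (alpha_matrix b t0 e \<iota> (S ** diag_mat l ** transpose S)) \<noteq> 0"
  unfolding det_ne_0_iff_kernel
proof (intro allI impI)
  fix g assume kernel: "alpha_matrix b t0 e \<iota> (S ** diag_mat l ** transpose S) *v g = 0"
  define P where "P = {(p::'n, q). e p \<le> e q}"
  define G where "G = (\<chi> p q. g $ (p, q))"
  define H where "H = transpose S ** G ** S"
  define coef where "coef p q = (if p = q then 1 else 2) * ((transpose S *v b) $ p * (transpose S *v b) $ q * H $ p $ q)" for p q
  have "transpose G = G"
    using alpha_matrix_kernel_symmetric[OF assms(3) kernel] by (simp add: G_def transpose_def vec_eq_iff)
  have "(\<Sum>(p, q)\<in>P. coef p q * (l p * l q) ^ (t0 + r)) = 0" if "r < card P" for r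
  proof -
    have "r \<in> \<iota> ` P"
      using \<iota> that by (simp add: P_def bij_betw_def)
    then obtain jk where "jk \<in> P" "r = \<iota> jk"
      by blast
    then have "0 = readout b (S ** diag_mat l ** transpose S) (t0 + r) \<bullet>
        (G *v readout b (S ** diag_mat l ** transpose S) (t0 + r))"
      using kernel alpha_matrix_row_sample[of e jk b t0 \<iota> "S ** diag_mat l ** transpose S" g]
      by (simp add: P_def G_def case_prod_unfold)
    also have "\<dots> = (\<Sum>(p, q)\<in>P. coef p q * (l p * l q) ^ (t0 + r))"
      unfolding coef_def H_def P_def by (rule readout_quadratic_form_orthogonal_diag[OF S assms(3) \<open>transpose G = G\<close>])
    finally show ?thesis ..
  qed
  then have coef_0: "coef p q = 0" if "(p, q) \<in> P" for p q
    using coeffs_zero_if_power_sums_zero[of P "\<lambda>(p, q). l p * l q" "\<lambda>(p, q). coef p q" t0 "(p, q)"]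
      that assms(5,6) by (simp add: P_def case_prod_unfold)
  have H_upper: "H $ p $ q = 0" if "(p, q) \<in> P" for p q
    using coef_0[OF that] u[of p] u[of q] by (cases "p = q") (simp_all add: coef_def)
  have "transpose H = H"
    using \<open>transpose G = G\<close> by (simp add: H_def matrix_transpose_mul matrix_mul_assoc)
  then have "H = 0"
    using H_upper by (rule symmetric_matrix_eq_0_if_upper_eq_0) (simp add: P_def)
  have "S ** H ** transpose S = (S ** transpose S) ** G ** (S ** transpose S)"
    by (simp add: H_def matrix_mul_assoc)
  also have "\<dots> = G"
    using S by (simp add: orthogonal_matrix_def)
  finally show "g = 0"
    using \<open>H = 0\<close> by (simp add: G_def vec_eq_iff)
qed

lemma exists_witness_det_ne_0:
  fixes b :: "real^'n"
  assumes "b \<noteq> 0" and e: "bij_betw e UNIV {0..<CARD('n)}"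
    and \<iota>: "bij_betw \<iota> {(p, q). e p \<le> e q} {0..<card {(p, q). e p \<le> e q}}"
  shows "\<exists>X. det (beta_matrix b t0 e X) \<noteq> 0 \<and> det (alpha_matrix b t0 e \<iota> X) \<noteq> 0"
proof -
  obtain S where S: "orthogonal_matrix S" "\<And>p. (transpose S *v b) $ p \<noteq> 0"
    using assms(1) by (metis exists_orthogonal_matrix_full_support)
  have "inj e"
    using e by (simp add: bij_betw_def)
  define l where "l p = (2::real) ^ 3 ^ e p" for p
  have l: "inj l" "\<And>p. l p \<noteq> 0" "inj_on (\<lambda>(p, q). l p * l q) {(p, q). e p \<le> e q}"
    using \<open>inj e\<close> inj_on_products_two_pow_three_pow[OF \<open>inj e\<close>]
    by (auto intro!: injI simp: l_def inj_eq)
  show ?thesis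
    using det_beta_matrix_orthogonal_diag_ne_0[OF S l(1,2) e]
      det_alpha_matrix_orthogonal_diag_ne_0[OF S \<open>inj e\<close> \<iota> l(2,3)]
    by blast
qed

theorem mainTheorem1:
  fixes b :: "real^'n" and t0 :: nat
  assumes "even CARD('n)"
    and "norm b = 1"
  shows "\<exists>N :: (real^'n^'n) set. N \<in> null_sets lebesgue \<and>
           (\<forall>X. X \<notin> N \<longrightarrow>
              inj_on (alpha_map b t0 X) sym_mats \<and> inj (beta_map b t0 X))"
proof -
  obtain e :: "'n \<Rightarrow> nat" where e: "bij_betw e UNIV {0..<CARD('n)}"
    using ex_bij_betw_finite_nat[OF finite[of "UNIV :: 'n set"]] by blast
  then have "inj e" and e_less: "\<And>j. e j < CARD('n)"
    by (auto simp: bij_betw_def)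
  obtain \<iota> where \<iota>: "bij_betw \<iota> {(p, q). e p \<le> e q} {0..<card {(p, q). e p \<le> e q}}"
    using ex_bij_betw_finite_nat[OF finite] by blast
  have \<iota>_less: "\<iota> jk < CARD('n) div 2 * (CARD('n) + 1)" if "e (fst jk) \<le> e (snd jk)" for jk
    using that bij_betwE[OF \<iota>] card_upper_pairs_even[OF \<open>inj e\<close> assms(1)] by (fastforce simp: case_prod_unfold)
  define F where "F X = det (beta_matrix b t0 e X) * det (alpha_matrix b t0 e \<iota> X)" for X
  have "b \<noteq> 0"
    using assms(2) by auto
  then have "\<exists>X. F X \<noteq> 0"
    using exists_witness_det_ne_0[OF _ e \<iota>] by (simp add: F_def)
  moreover have "real_polynomial_function F"
    unfolding F_def by (intro real_polynomial_function.intros(4) real_polynomial_function_det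
        polynomial_matrix_function_beta_matrix polynomial_matrix_function_alpha_matrix)
  ultimately have "{X. F X = 0} \<in> null_sets lebesgue"
    using real_polynomial_function_zeros_null by blast
  moreover have "inj_on (alpha_map b t0 X) sym_mats \<and> inj (beta_map b t0 X)" if "F X \<noteq> 0" for X
  proof
    show "inj_on (alpha_map b t0 X) sym_mats"
      using that \<iota>_less by (intro inj_on_alpha_map[where e = e and \<iota> = \<iota>]) (simp_all add: F_def)
    show "inj (beta_map b t0 X)"
      using that e_less by (intro inj_beta_map[where e = e]) (simp_all add: F_def)
  qed
  ultimately show ?thesis
    by blast
qed

end
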